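(* Let $C$ be a convex subset of a real topological vector space $X$. Then: (i) $\operatorname{fri} C$ is a convex subset of $C$; (ii) for every $x\in\operatorname{fri} C$ and every $y\in C$, the half-open segment $[x,y)=\{(1-t)x+ty: t\in[0,1)\}$ is contained in $\operatorname{fri} C$; (iii) if $\operatorname{fri} C\neq\emptyset$, then $\overline{C}=\overline{\operatorname{fri} C}$; (iv) $\operatorname{fri}(\operatorname{fri} C)=\operatorname{fri} C$.
   Context: For a convex set $C$, a convex subset $F\subseteq C$ is a face of $C$ if for every $x\in F$ and all $y,z\in C$ with $x\in(y,z)=\{(1-t)y+tz:t\in(0,1)\}$ we have $y,z\in F$; $F_{\min}(x,C)$ is the intersection of all faces of $C$ containing $x\in C$. The face relative interior is $\operatorname{fri} C=\{x\in C: C\subseteq\overline{F_{\min}(x,C)}\}$. *)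

theory Defs
  imports "HOL-Analysis.Analysis"
begin

definition F_min :: "'a::real_vector \<Rightarrow> 'a set \<Rightarrow> 'a set" where
  "F_min x C = \<Inter> {F. F face_of C \<and> x \<in> F}"

definition fri :: "'a::{real_vector,topological_space} set \<Rightarrow> 'a set" where
  "fri C = {x \<in> C. C \<subseteq> closure (F_min x C)}"

end

theory Submission
  imports Defs
begin

text \<open>
  The minimal face of a convex set \<open>C\<close> at \<open>x\<close> consists exactly of the points \<open>y \<in> C\<close> for
  which the segment from \<open>y\<close> to \<open>x\<close> can be prolonged beyond \<open>x\<close> inside \<open>C\<close>. Moving \<open>x\<close> towards
  any \<open>y \<in> C\<close> keeps \<open>x\<close> inside the minimal face of the moved point, so minimal faces only
  grow along half-open segments \<open>[x, y)\<close>; this gives (i) and (ii). Every point of \<open>C\<close> is a limit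
  along such a segment, whence (iii). For (iv), a point \<open>y\<close> of the minimal face of \<open>x \<in> fri C\<close>
  is approached along \<open>[x, y)\<close> by points of \<open>fri C\<close> that can still be prolonged beyond \<open>x\<close>
  within \<open>fri C\<close>, so they lie in the minimal face of \<open>x\<close> relative to \<open>fri C\<close>.
\<close>

lemma face_of_F_min:
  assumes "convex C" "x \<in> C"
  shows "F_min x C face_of C"
proof -
  have "{F. F face_of C \<and> x \<in> F} \<noteq> {}" using assms face_of_refl by blast
  then show ?thesis unfolding F_min_def by (rule face_of_Inter) auto
qed

lemma in_F_min: "x \<in> F_min x C"
  unfolding F_min_def by auto

lemma F_min_subset_face: "F face_of C \<Longrightarrow> x \<in> F \<Longrightarrow> F_min x C \<subseteq> F"
  unfolding F_min_def by auto

lemma in_F_min_segment: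
  fixes C :: "'a::real_vector set"
  assumes "convex C" "x \<in> C" "y \<in> C" "0 \<le> t" "t < 1"
  shows "x \<in> F_min ((1 - t) *\<^sub>R x + t *\<^sub>R y) C"
proof (cases "t = 0 \<or> x = y")
  case True
  then have "(1 - t) *\<^sub>R x + t *\<^sub>R y = x" by (auto simp: algebra_simps)
  then show ?thesis using in_F_min by simp
next
  case False
  let ?w = "(1 - t) *\<^sub>R x + t *\<^sub>R y"
  have "?w \<in> C" using assms convexD[OF assms(1-3), of "1 - t" t] by simp
  moreover have "?w \<in> open_segment x y" using False assms by (auto simp: in_segment intro!: exI[of _ t])
  ultimately show ?thesis using face_ofD[OF face_of_F_min, of C ?w] assms(1-3) in_F_min by blast
qed

definition extendable_through :: "'a::real_vector \<Rightarrow> 'a set \<Rightarrow> 'a set" where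
  "extendable_through x C = {y \<in> C. \<exists>e>0. x + e *\<^sub>R (x - y) \<in> C}"

lemma extendable_through_subset_face:
  assumes "y \<in> extendable_through x C" "F face_of C" "x \<in> F"
  shows "y \<in> F"
proof (cases "y = x")
  case True then show ?thesis using assms(3) by simp
next
  case False
  obtain e where e: "e > 0" and yC: "y \<in> C" and zC: "x + e *\<^sub>R (x - y) \<in> C"
    using assms(1) by (auto simp: extendable_through_def)
  let ?z = "x + e *\<^sub>R (x - y)"
  define u where "u = 1 / (1 + e)"
  have u: "0 < u" "u < 1" "u * (1 + e) = 1" using e by (auto simp: u_def field_simps)
  have "(1 - u) *\<^sub>R y + u *\<^sub>R ?z = (1 - u * (1 + e)) *\<^sub>R y + (u * (1 + e)) *\<^sub>R x"
    by (simp add: algebra_simps)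
  then have "x = (1 - u) *\<^sub>R y + u *\<^sub>R ?z" using u by simp
  moreover have "y \<noteq> ?z"
  proof
    assume "y = ?z"
    then have "(1 + e) *\<^sub>R (x - y) = 0" by (simp add: algebra_simps)
    then show False using e False by simp
  qed
  ultimately have "x \<in> open_segment y ?z" using u unfolding in_segment by blast
  then show ?thesis using face_ofD[OF assms(2)] assms(3) yC zC by blast
qed

lemma convex_prolongation_shrink:
  fixes C :: "'a::real_vector set"
  assumes "convex C" "x \<in> C" "x + e' *\<^sub>R (x - y) \<in> C" "0 < e" "e \<le> e'"
  shows "x + e *\<^sub>R (x - y) \<in> C"
proof -
  define a where "a = e / e'"
  have a: "0 \<le> a" "a \<le> 1" "a * e' = e" using assms by (auto simp: a_def field_simps)
  have "(1 - a) *\<^sub>R x + a *\<^sub>R (x + e' *\<^sub>R (x - y)) \<in> C"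
    using convexD[OF assms(1-3), of "1 - a" a] a by simp
  also have "(1 - a) *\<^sub>R x + a *\<^sub>R (x + e' *\<^sub>R (x - y)) = x + (a * e') *\<^sub>R (x - y)"
    by (simp add: algebra_simps)
  finally show ?thesis using a by simp
qed

lemma convex_extendable_through:
  fixes C :: "'a::real_vector set"
  assumes "convex C" "x \<in> C"
  shows "convex (extendable_through x C)"
  unfolding convex_def
proof (intro ballI allI impI)
  fix y1 y2 :: 'a and u v :: real
  assume "y1 \<in> extendable_through x C" "y2 \<in> extendable_through x C"
    and uv: "0 \<le> u" "0 \<le> v" "u + v = 1"
  then obtain e1 e2 where e1: "e1 > 0" "x + e1 *\<^sub>R (x - y1) \<in> C" "y1 \<in> C"
    and e2: "e2 > 0" "x + e2 *\<^sub>R (x - y2) \<in> C" "y2 \<in> C"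
    by (auto simp: extendable_through_def)
  define e where "e = min e1 e2"
  have "x + e *\<^sub>R (x - y1) \<in> C" "x + e *\<^sub>R (x - y2) \<in> C"
    using convex_prolongation_shrink[OF assms e1(2)] convex_prolongation_shrink[OF assms e2(2)]
      e1 e2 by (auto simp: e_def)
  then have "u *\<^sub>R (x + e *\<^sub>R (x - y1)) + v *\<^sub>R (x + e *\<^sub>R (x - y2)) \<in> C"
    using convexD[OF assms(1)] uv by simp
  also have "u *\<^sub>R (x + e *\<^sub>R (x - y1)) + v *\<^sub>R (x + e *\<^sub>R (x - y2))
      = (u + v) *\<^sub>R x + e *\<^sub>R ((u + v) *\<^sub>R x - (u *\<^sub>R y1 + v *\<^sub>R y2))"
    by (simp add: algebra_simps)
  finally have "x + e *\<^sub>R (x - (u *\<^sub>R y1 + v *\<^sub>R y2)) \<in> C" using uv by simp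
  moreover have "u *\<^sub>R y1 + v *\<^sub>R y2 \<in> C" using convexD[OF assms(1) e1(3) e2(3)] uv by simp
  moreover have "e > 0" using e1 e2 by (simp add: e_def)
  ultimately show "u *\<^sub>R y1 + v *\<^sub>R y2 \<in> extendable_through x C"
    by (auto simp: extendable_through_def)
qed

lemma extendable_through_segment_endpoint:
  fixes C :: "'a::real_vector set"
  assumes "convex C" "a \<in> C" "b \<in> C" "(1 - s) *\<^sub>R a + s *\<^sub>R b \<in> extendable_through x C"
    "0 < s" "s < 1"
  shows "a \<in> extendable_through x C"
proof -
  let ?w = "(1 - s) *\<^sub>R a + s *\<^sub>R b"
  obtain e where e: "e > 0" and zC: "x + e *\<^sub>R (x - ?w) \<in> C"
    using assms(4) by (auto simp: extendable_through_def)
  \<comment> \<open>The convex combination of \<open>x + e (x - w)\<close> and \<open>b\<close> that cancels \<open>b\<close> prolongs \<open>[a, x]\<close>.\<close>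
  define l where "l = 1 / (1 + e * s)"
  define d where "d = l * e * (1 - s)"
  have es: "0 < e * s" using e assms by simp
  have l: "0 \<le> l" "l \<le> 1" "1 - l = l * e * s" using es by (auto simp: l_def field_simps)
  have d: "d > 0" using e assms es by (simp add: d_def l_def add_pos_pos)
  have "l *\<^sub>R (x + e *\<^sub>R (x - ?w)) + (1 - l) *\<^sub>R b \<in> C"
    using convexD[OF assms(1) zC assms(3), of l "1 - l"] l by simp
  also have "l *\<^sub>R (x + e *\<^sub>R (x - ?w)) + (1 - l) *\<^sub>R b
      = (l + l * e) *\<^sub>R x - (l * e * (1 - s)) *\<^sub>R a + ((1 - l) - l * e * s) *\<^sub>R b"
    by (simp add: algebra_simps)
  also have "\<dots> = (1 + d) *\<^sub>R x - d *\<^sub>R a"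
    using l by (simp add: d_def algebra_simps flip: scaleR_add_left)
  also have "\<dots> = x + d *\<^sub>R (x - a)" by (simp add: algebra_simps)
  finally show ?thesis using d assms(2) by (auto simp: extendable_through_def)
qed

lemma extendable_through_face_of:
  fixes C :: "'a::real_vector set"
  assumes "convex C" "x \<in> C"
  shows "extendable_through x C face_of C"
  unfolding face_of_def
proof (intro conjI ballI impI)
  show "extendable_through x C \<subseteq> C" by (auto simp: extendable_through_def)
  show "convex (extendable_through x C)" using convex_extendable_through[OF assms] .
next
  fix a b w assume ab: "a \<in> C" "b \<in> C" and w: "w \<in> extendable_through x C"
    and "w \<in> open_segment a b"
  then obtain s where s: "0 < s" "s < 1" "w = (1 - s) *\<^sub>R a + s *\<^sub>R b"
    by (auto simp: in_segment)
  show "a \<in> extendable_through x C"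
    using extendable_through_segment_endpoint[OF assms(1) ab] w s by blast
  have "(1 - (1 - s)) *\<^sub>R b + (1 - s) *\<^sub>R a \<in> extendable_through x C"
    using w s by (simp add: add.commute)
  then show "b \<in> extendable_through x C"
    using extendable_through_segment_endpoint[OF assms(1) ab(2,1), where s = "1 - s"] s by simp
qed

lemma F_min_eq_extendable_through:
  fixes C :: "'a::real_vector set"
  assumes "convex C" "x \<in> C"
  shows "F_min x C = extendable_through x C"
proof
  have "x \<in> extendable_through x C" using assms by (auto simp: extendable_through_def intro: exI[of _ 1])
  then show "F_min x C \<subseteq> extendable_through x C"
    using F_min_subset_face[OF extendable_through_face_of[OF assms]] by blast
  show "extendable_through x C \<subseteq> F_min x C"
    using extendable_through_subset_face face_of_F_min[OF assms] in_F_min by blast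
qed

lemma fri_subset: "fri C \<subseteq> C"
  by (auto simp: fri_def)

lemma fri_segment:
  fixes C :: "'a::{real_vector,topological_space} set"
  assumes "convex C" "x \<in> fri C" "y \<in> C" "0 \<le> t" "t < 1"
  shows "(1 - t) *\<^sub>R x + t *\<^sub>R y \<in> fri C"
proof -
  let ?w = "(1 - t) *\<^sub>R x + t *\<^sub>R y"
  have xC: "x \<in> C" and C_sub: "C \<subseteq> closure (F_min x C)" using assms(2) by (auto simp: fri_def)
  have wC: "?w \<in> C" using assms xC convexD[OF assms(1) xC assms(3), of "1 - t" t] by simp
  have "F_min x C \<subseteq> F_min ?w C"
    using F_min_subset_face[OF face_of_F_min[OF assms(1) wC] in_F_min_segment[OF assms(1) xC assms(3-5)]] .
  then have "closure (F_min x C) \<subseteq> closure (F_min ?w C)" by (rule closure_mono)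
  then show ?thesis using C_sub wC by (auto simp: fri_def)
qed

lemma convex_fri:
  fixes C :: "'a::{real_vector,topological_space} set"
  assumes "convex C"
  shows "convex (fri C)"
  unfolding convex_alt
proof (intro ballI allI impI)
  fix x y :: 'a and u :: real
  assume x: "x \<in> fri C" and y: "y \<in> fri C" and u: "0 \<le> u \<and> u \<le> 1"
  show "(1 - u) *\<^sub>R x + u *\<^sub>R y \<in> fri C"
  proof (cases "u = 1")
    case True then show ?thesis using y by simp
  next
    case False then show ?thesis using fri_segment[OF assms x, of y u] y fri_subset u by auto
  qed
qed

lemma closure_half_open_segment:
  fixes x y :: "'a::{real_vector, topological_ab_group_add}"
  assumes scaleR_cont: "continuous_on UNIV (\<lambda>p :: real \<times> 'a. fst p *\<^sub>R snd p)"
    and segment: "\<And>t. 0 \<le> t \<Longrightarrow> t < 1 \<Longrightarrow> (1 - t) *\<^sub>R x + t *\<^sub>R y \<in> T"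
  shows "y \<in> closure T"
proof -
  define g where "g = (\<lambda>t::real. x + t *\<^sub>R (y - x))"
  have g_eq: "g t = (1 - t) *\<^sub>R x + t *\<^sub>R y" for t by (simp add: g_def algebra_simps)
  have "continuous_on UNIV (\<lambda>t::real. t *\<^sub>R (y - x))"
    using continuous_on_compose2[OF scaleR_cont, of UNIV "\<lambda>t. (t, y - x)"]
    by (simp add: continuous_on_Pair continuous_on_id continuous_on_const)
  then have "continuous_on (closure {0..<1}) g"
    unfolding g_def by (intro continuous_on_add continuous_on_const) (auto intro: continuous_on_subset)
  moreover have "g ` {0..<1} \<subseteq> T" using segment g_eq by auto
  ultimately have "g ` closure {0..<1} \<subseteq> closure T"
    by (meson closure_mono image_closure_subset closed_closure subset_trans closure_subset)
  moreover have "(1::real) \<in> closure {0..<1}" by simp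
  ultimately show ?thesis using g_eq[of 1] by auto
qed

lemma closure_fri:
  fixes C :: "'a::{real_vector, topological_ab_group_add} set"
  assumes "continuous_on UNIV (\<lambda>p :: real \<times> 'a. fst p *\<^sub>R snd p)" "convex C" "fri C \<noteq> {}"
  shows "closure C = closure (fri C)"
proof
  obtain x where x: "x \<in> fri C" using assms(3) by blast
  have "C \<subseteq> closure (fri C)"
    using closure_half_open_segment[OF assms(1)] fri_segment[OF assms(2) x] by blast
  then show "closure C \<subseteq> closure (fri C)" by (simp add: closure_minimal)
  show "closure (fri C) \<subseteq> closure C" using fri_subset by (rule closure_mono)
qed

lemma half_open_segment_subset_F_min_fri:
  fixes C :: "'a::{real_vector,topological_space} set"
  assumes "convex C" "x \<in> fri C" "y \<in> extendable_through x C" "0 \<le> t" "t < 1"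
  shows "(1 - t) *\<^sub>R x + t *\<^sub>R y \<in> F_min x (fri C)"
proof -
  let ?w = "(1 - t) *\<^sub>R x + t *\<^sub>R y"
  obtain e where e: "e > 0" and yC: "y \<in> C" and zC: "x + e *\<^sub>R (x - y) \<in> C"
    using assms(3) by (auto simp: extendable_through_def)
  have "(1 - t/2) *\<^sub>R x + (t/2) *\<^sub>R (x + e *\<^sub>R (x - y)) \<in> fri C"
    using fri_segment[OF assms(1,2) zC] assms(4,5) by simp
  also have "(1 - t/2) *\<^sub>R x + (t/2) *\<^sub>R (x + e *\<^sub>R (x - y)) = x + (e/2) *\<^sub>R (x - ?w)"
    by (simp add: algebra_simps)
  finally have "?w \<in> extendable_through x (fri C)"
    using fri_segment[OF assms(1,2) yC assms(4,5)] e
    by (auto simp: extendable_through_def intro!: exI[of _ "e/2"])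
  then show ?thesis
    using extendable_through_subset_face face_of_F_min[OF convex_fri[OF assms(1)] assms(2)] in_F_min
    by blast
qed

lemma fri_fri:
  fixes C :: "'a::{real_vector, topological_ab_group_add} set"
  assumes scaleR_cont: "continuous_on UNIV (\<lambda>p :: real \<times> 'a. fst p *\<^sub>R snd p)"
    and "convex C"
  shows "fri (fri C) = fri C"
proof
  show "fri (fri C) \<subseteq> fri C" by (rule fri_subset)
  show "fri C \<subseteq> fri (fri C)"
  proof
    fix x assume x: "x \<in> fri C"
    then have "C \<subseteq> closure (extendable_through x C)"
      using F_min_eq_extendable_through[OF assms(2)] by (auto simp: fri_def)
    moreover have "extendable_through x C \<subseteq> closure (F_min x (fri C))"
      using closure_half_open_segment[OF scaleR_cont]
        half_open_segment_subset_F_min_fri[OF assms(2) x] by blast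
    ultimately have "C \<subseteq> closure (F_min x (fri C))"
      by (meson closure_minimal closed_closure subset_trans)
    then show "x \<in> fri (fri C)" using x fri_subset by (auto simp: fri_def)
  qed
qed

theorem proposition4p1:
  fixes C :: "'a::{real_vector, topological_ab_group_add} set"
  assumes tvs_scaleR: "continuous_on UNIV (\<lambda>p :: real \<times> 'a. fst p *\<^sub>R snd p)"
    and "convex C"
  shows "(convex (fri C) \<and> fri C \<subseteq> C)
       \<and> (\<forall>x \<in> fri C. \<forall>y \<in> C.
            {(1 - t) *\<^sub>R x + t *\<^sub>R y | t. 0 \<le> t \<and> t < 1} \<subseteq> fri C)
       \<and> (fri C \<noteq> {} \<longrightarrow> closure C = closure (fri C))
       \<and> fri (fri C) = fri C"
  using convex_fri[OF assms(2)] fri_subset fri_segment[OF assms(2)]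
    closure_fri[OF assms] fri_fri[OF assms] by blast

end
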